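(* Let $A \in \mathbb{R}^{n\times n}$ be a full-rank real matrix all of whose eigenvalues have negative real part, let $P = P^\top \in \mathbb{R}^{n\times n}$, and set $U(\bm{x}) = \tfrac12 \bm{x}^\top P \bm{x}$. Then the decomposition $A\bm{x} = -\nabla U(\bm{x}) + f_U(\bm{x})$ holds for all $\bm{x}\in\mathbb{R}^n$ with $f_U(\bm{x}) = (A+P)\bm{x}$. Suppose further that $P$ is an optimal solution of the optimization problem \[ \text{maximize } \operatorname{tr}(P) \quad \text{subject to} \quad P = P^\top,\quad P(A+P) \preceq 0 . \] Then $PA + A^\top P + 2P^2 = 0$, and hence $\nabla U(\bm{x}) \cdot f_U(\bm{x}) = 0$ for all $\bm{x}\in\mathbb{R}^n$.
   Context: For a (not necessarily symmetric) square matrix $M$, the constraint $M \preceq 0$ means $\bm{x}^\top M \bm{x} \le 0$ for all $\bm{x}\in\mathbb{R}^n$, i.e. the symmetric part $\tfrac12(M+M^\top)$ is negative semidefinite; thus $P(A+P)\preceq 0$ is equivalent to $PA + A^\top P + 2P^2 \preceq 0$. $\operatorname{tr}$ denotes the trace. *)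

theory Defs
  imports "HOL-Analysis.Analysis"
begin

definition cmat :: "real^'n^'n \<Rightarrow> complex^'n^'n" where
  "cmat A = (\<chi> i j. complex_of_real (A $ i $ j))"

definition is_eigenvalue :: "real^'n^'n \<Rightarrow> complex \<Rightarrow> bool" where
  "is_eigenvalue A l \<longleftrightarrow> (\<exists>v::complex^'n. v \<noteq> 0 \<and> cmat A *v v = l *s v)"

text \<open>M \<preceq> 0 for a not necessarily symmetric matrix.\<close>
definition nsd :: "real^'n^'n \<Rightarrow> bool" where
  "nsd M \<longleftrightarrow> (\<forall>x. x \<bullet> (M *v x) \<le> 0)"

definition feasible :: "real^'n^'n \<Rightarrow> real^'n^'n \<Rightarrow> bool" where
  "feasible A P \<longleftrightarrow> transpose P = P \<and> nsd (P ** (A + P))"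

definition optimal :: "real^'n^'n \<Rightarrow> real^'n^'n \<Rightarrow> bool" where
  "optimal A P \<longleftrightarrow> feasible A P \<and> (\<forall>Q. feasible A Q \<longrightarrow> trace Q \<le> trace P)"

end

(*
  At a feasible P the matrix S = P A + A^T P + 2 P^2 is negative semidefinite, since
  x^T S x = 2 (P x) . ((A + P) x) <= 0. If S <> 0, pick v = S w <> 0; Cauchy-Schwarz for the
  form -S bounds (v . x)^2 by a multiple of -(P x) . ((A + P) x). The constraint is convex in P,
  and the Hurwitz assumption yields a strictly feasible P0, a scaled solution of the Lyapunov
  equation P0 A + A^T P0 = -I. A small step from P towards P0 plus a rank-one term eps v v^T
  then stays feasible and increases the trace, so at an optimum S = 0.

  The Lyapunov equation is solvable because its linear operator is injective: a solution of
  Q A + A^T Q = 0 solves the Sylvester equation A^T Q = Q (-A), and as A^T and -A have no common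
  eigenvalue, multiplying by a product of linear factors annihilating -A (fundamental theorem of
  algebra) forces Q = 0.
*)

theory Submission
  imports Defs "HOL-Computational_Algebra.Fundamental_Theorem_Algebra"
begin

lemma inner_matrix_vector_mult: "(x::real^'n) \<bullet> (M *v y) = (transpose M *v x) \<bullet> y"
  by (simp add: dot_lmul_matrix)

lemma inner_matrix_vector_mult_symmetric:
  "transpose M = M \<Longrightarrow> (x::real^'n) \<bullet> (M *v y) = (M *v x) \<bullet> y"
  using inner_matrix_vector_mult[of x M y] by simp

lemma transpose_add: "transpose (M + N) = transpose M + transpose (N :: 'a::semiring_1^'n^'m)"
  by (simp add: transpose_def vec_eq_iff)

lemma transpose_diff: "transpose (M - N) = transpose M - transpose (N :: 'a::ring_1^'n^'m)"
  by (simp add: transpose_def vec_eq_iff)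

lemma matrix_add_rdistrib: "(B + C) ** A = B ** A + C ** (A :: 'a::semiring_1^'n^'n)"
  by (simp add: matrix_matrix_mult_def vec_eq_iff sum.distrib distrib_right)

lemma matrix_vector_mult_uminus: "(- M) *v x = - (M *v (x::'a::ring_1^'n))"
  by (simp add: matrix_vector_mult_def vec_eq_iff sum_negf)

lemma trace_scaleR: "trace (r *\<^sub>R (M::real^'n^'n)) = r * trace M"
  by (simp add: trace_def sum_distrib_left)

definition outer_prod :: "real^'n \<Rightarrow> real^'n^'n" where
  "outer_prod v = (\<chi> i j. v$i * v$j)"

lemma outer_prod_mult_vector: "outer_prod v *v x = (v \<bullet> x) *\<^sub>R v"
  by (simp add: outer_prod_def matrix_vector_mult_def vec_eq_iff inner_vec_def sum_distrib_left
      mult_ac)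

lemma trace_outer_prod: "trace (outer_prod v) = v \<bullet> v"
  by (simp add: outer_prod_def trace_def inner_vec_def)

lemma transpose_outer_prod: "transpose (outer_prod v) = outer_prod v"
  by (simp add: outer_prod_def transpose_def vec_eq_iff mult.commute)

lemma mat_matrix_mul_eq_scale:
  fixes M :: "'a::semiring_1^'n^'m"
  shows "mat a ** M = (\<chi> i j. a * M $ i $ j)"
  by (simp add: matrix_matrix_mult_def mat_def vec_eq_iff if_distrib if_distribR sum.delta
      cong: if_cong)

lemma matrix_mul_mat_eq_scale:
  fixes M :: "'a::semiring_1^'n^'m"
  shows "M ** mat a = (\<chi> i j. M $ i $ j * a)"
  by (simp add: matrix_matrix_mult_def mat_def vec_eq_iff if_distrib if_distribR sum.delta
      cong: if_cong)

lemma mat_matrix_mul_commute: "mat a ** M = M ** (mat a :: 'a::comm_semiring_1^'n^'n)"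
  by (simp add: mat_matrix_mul_eq_scale matrix_mul_mat_eq_scale mult.commute)

lemma mat_mult_mat: "mat a ** mat b = (mat (a * b) :: 'a::semiring_1^'n^'n)"
  by (simp add: mat_matrix_mul_eq_scale) (simp add: mat_def vec_eq_iff)

lemma mat_add: "mat (a + b) = mat a + (mat b :: 'a::semiring_1^'n^'n)"
  by (simp add: mat_def vec_eq_iff)

lemma mat_uminus: "mat (- a) = - (mat a :: 'a::ring_1^'n^'n)"
  by (simp add: mat_def vec_eq_iff)

lemma matrix_diff_ldistrib: "A ** (B - C) = A ** B - A ** (C :: 'a::ring_1^'n^'n)"
  by (simp add: matrix_matrix_mult_def vec_eq_iff sum_subtractf right_diff_distrib)

lemma matrix_diff_rdistrib: "(B - C) ** A = B ** A - C ** (A :: 'a::ring_1^'n^'n)"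
  by (simp add: matrix_matrix_mult_def vec_eq_iff sum_subtractf left_diff_distrib)

lemma matrix_mul_uminus_left: "(- A) ** B = - (A ** (B :: 'a::ring_1^'n^'n))"
  by (simp add: matrix_matrix_mult_def vec_eq_iff sum_negf)

lemma matrix_mul_uminus_right: "A ** (- B) = - (A ** (B :: 'a::ring_1^'n^'n))"
  by (simp add: matrix_matrix_mult_def vec_eq_iff sum_negf)

lemma matrix_mul_sum_right: "A ** (\<Sum>i\<in>I. f i) = (\<Sum>i\<in>I. A ** f i :: 'a::semiring_1^'n^'n)"
  by (induction I rule: infinite_finite_induct) (auto simp: matrix_add_ldistrib)

lemma mat_of_real_matrix_mul: "mat (of_real r) ** M = r *\<^sub>R (M :: 'a::real_algebra_1^'n^'n)"
  by (simp add: mat_matrix_mul_eq_scale vec_eq_iff) (simp add: scaleR_conv_of_real)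

lemma mat_matrix_vector_mult: "mat a *v x = a *s (x :: 'a::semiring_1^'n)"
  by (simp add: matrix_vector_mult_def mat_def vec_eq_iff if_distrib if_distribR sum.delta
      cong: if_cong)

lemma invertible_matrix_mul_eq_0_left:
  fixes M Y :: "'a::field^'n^'n"
  assumes "invertible M" "M ** Y = 0"
  shows "Y = 0"
proof -
  obtain M' where "M' ** M = mat 1" using assms(1) by (auto simp: invertible_def)
  then have "Y = M' ** (M ** Y)" by (simp add: matrix_mul_assoc)
  with assms(2) show ?thesis by simp
qed

lemma invertible_matrix_mul_eq_0_right:
  fixes M Y :: "'a::field^'n^'n"
  assumes "invertible M" "Y ** M = 0"
  shows "Y = 0"
proof -
  obtain M' where "M ** M' = mat 1" using assms(1) by (auto simp: invertible_def)
  then have "Y = (Y ** M) ** M'" by (simp flip: matrix_mul_assoc)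
  with assms(2) show ?thesis by simp
qed

lemma invertible_transpose_iff: "invertible (transpose M) \<longleftrightarrow> invertible (M :: 'a::field^'n^'n)"
  by (metis invertible_left_inverse invertible_right_inverse right_invertible_transpose)

lemma invertible_uminus: "invertible M \<Longrightarrow> invertible (- M :: 'a::field^'n^'n)"
  unfolding invertible_def
  by (metis matrix_mul_uminus_left matrix_mul_uminus_right minus_minus)

lemma nsd_cauchy_schwarz:
  fixes S :: "real^'n^'n"
  assumes symS: "transpose S = S" and "nsd S"
  shows "(w \<bullet> (S *v x))\<^sup>2 \<le> (w \<bullet> (S *v w)) * (x \<bullet> (S *v x))"
proof -
  define \<alpha> where "\<alpha> = w \<bullet> (S *v w)"
  define \<beta> where "\<beta> = w \<bullet> (S *v x)"
  define \<gamma> where "\<gamma> = x \<bullet> (S *v x)"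
  have xw: "x \<bullet> (S *v w) = \<beta>"
    unfolding \<beta>_def using inner_matrix_vector_mult_symmetric[OF symS, of x w]
    by (simp add: inner_commute)
  have quadratic: "\<alpha> + 2*r*\<beta> + r\<^sup>2*\<gamma> \<le> 0" for r
  proof -
    have "(w + r *\<^sub>R x) \<bullet> (S *v (w + r *\<^sub>R x)) = \<alpha> + 2*r*\<beta> + r\<^sup>2*\<gamma>"
      by (simp add: matrix_vector_right_distrib matrix_vector_mult_scaleR inner_add_left
          inner_add_right xw \<alpha>_def \<beta>_def \<gamma>_def power2_eq_square algebra_simps)
    with \<open>nsd S\<close> show ?thesis by (metis nsd_def)
  qed
  have "\<gamma> \<le> 0" using \<open>nsd S\<close> by (simp add: nsd_def \<gamma>_def)
  show ?thesis
  proof (cases "\<gamma> = 0")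
    case True
    have "\<beta> = 0"
    proof (rule ccontr)
      assume "\<beta> \<noteq> 0"
      with quadratic[of "(1 - \<alpha>)/(2*\<beta>)"] True show False by (simp add: field_simps)
    qed
    with True show ?thesis by (simp add: \<beta>_def \<gamma>_def)
  next
    case False
    with \<open>\<gamma> \<le> 0\<close> have "\<gamma> < 0" by simp
    with quadratic[of "-\<beta>/\<gamma>"] have "\<alpha>*\<gamma> - \<beta>\<^sup>2 \<ge> 0"
      by (simp add: field_simps power2_eq_square)
    then show ?thesis by (simp add: \<alpha>_def \<beta>_def \<gamma>_def)
  qed
qed

section \<open>Improving a feasible point\<close>

text \<open>For \<open>U x = x \<bullet> (X *v x) / 2\<close> and \<open>f\<^sub>U x = (A + X) *v x\<close> this is
  \<open>\<nabla>U(x) \<bullet> f\<^sub>U(x)\<close>.\<close>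

definition grad_dot_flow :: "real^'n^'n \<Rightarrow> real^'n^'n \<Rightarrow> real^'n \<Rightarrow> real" where
  "grad_dot_flow A X x = (X *v x) \<bullet> ((A + X) *v x)"

lemma nsd_iff_grad_dot_flow_nonpos:
  assumes "transpose X = X"
  shows "nsd (X ** (A + X)) \<longleftrightarrow> (\<forall>x. grad_dot_flow A X x \<le> 0)"
  unfolding nsd_def grad_dot_flow_def
  by (simp add: matrix_vector_mul_assoc[symmetric] inner_matrix_vector_mult_symmetric[OF assms])

lemma quadratic_form_lyapunov:
  fixes A X :: "real^'n^'n"
  assumes "transpose X = X"
  shows "x \<bullet> ((X ** A + transpose A ** X) *v x) = 2 * ((X *v x) \<bullet> (A *v x))"
  using inner_matrix_vector_mult_symmetric[OF assms, of x "A *v x"]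
    inner_matrix_vector_mult[of x "transpose A" "X *v x"]
  by (simp add: matrix_vector_mult_add_rdistrib matrix_vector_mul_assoc[symmetric]
      inner_add_right inner_commute)

lemma quadratic_form_riccati:
  fixes A X :: "real^'n^'n"
  assumes "transpose X = X"
  shows "x \<bullet> ((X ** A + transpose A ** X + 2 *\<^sub>R (X ** X)) *v x) = 2 * grad_dot_flow A X x"
proof -
  have "X ** A + transpose A ** X + 2 *\<^sub>R (X ** X) = X ** (A + X) + transpose (A + X) ** X"
    using assms by (simp add: matrix_add_ldistrib transpose_add matrix_add_rdistrib scaleR_2)
  then show ?thesis
    using quadratic_form_lyapunov[OF assms, of x "A + X"] by (simp add: grad_dot_flow_def)
qed

lemma grad_dot_flow_convex:
  fixes A P P0 :: "real^'n^'n"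
  assumes "0 \<le> t" "t \<le> 1"
  shows "grad_dot_flow A ((1 - t) *\<^sub>R P + t *\<^sub>R P0) x
           \<le> (1 - t) * grad_dot_flow A P x + t * grad_dot_flow A P0 x"
proof -
  define p p0 where "p = P *v x" and "p0 = P0 *v x"
  define m where "m = (1 - t) *\<^sub>R p + t *\<^sub>R p0"
  have "(1 - t) * (p \<bullet> p) + t * (p0 \<bullet> p0) - m \<bullet> m = t * (1 - t) * ((p - p0) \<bullet> (p - p0))"
    by (simp add: m_def inner_add_left inner_add_right inner_diff_left inner_diff_right
        inner_commute algebra_simps)
  also have "\<dots> \<ge> 0" using assms by simp
  finally have "m \<bullet> m \<le> (1 - t) * (p \<bullet> p) + t * (p0 \<bullet> p0)" by simp
  then show ?thesis
    by (simp add: grad_dot_flow_def matrix_vector_mult_add_rdistrib scaleR_matrix_vector_assoc[symmetric]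
        m_def p_def p0_def inner_add_left inner_add_right algebra_simps)
qed

lemma grad_dot_flow_rank_one_update:
  "grad_dot_flow A (M + e *\<^sub>R outer_prod v) x
     = grad_dot_flow A M x + e * (v \<bullet> x) * (v \<bullet> (A *v x) + 2 * (v \<bullet> (M *v x)))
       + e\<^sup>2 * (v \<bullet> x)\<^sup>2 * (v \<bullet> v)"
  by (simp add: grad_dot_flow_def matrix_vector_mult_add_rdistrib scaleR_matrix_vector_assoc[symmetric]
      outer_prod_mult_vector inner_add_left inner_add_right inner_commute power2_eq_square
      algebra_simps)

lemma perturbation_inequality:
  fixes n a b c t \<eta> \<epsilon> V \<beta> X :: real
  assumes "0 \<le> n" "a\<^sup>2 \<le> c * n" "\<bar>b\<bar> \<le> \<beta> * X" "0 < t" "0 < \<eta>" "0 \<le> \<epsilon>" "0 \<le> V"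
    and small: "\<epsilon>\<^sup>2 * (V + \<beta>\<^sup>2 / (4 * t * \<eta>)) * c \<le> 1 - t"
  shows "- (1 - t) * n - t * \<eta> * X\<^sup>2 + \<epsilon> * a * b + \<epsilon>\<^sup>2 * a\<^sup>2 * V \<le> 0"
proof -
  have "a * b \<le> \<bar>a\<bar> * \<bar>b\<bar>" by (metis abs_ge_self abs_mult)
  also have "\<dots> \<le> \<bar>a\<bar> * (\<beta> * X)" using assms by (simp add: mult_left_mono)
  finally have "\<epsilon> * a * b \<le> \<epsilon> * \<bar>a\<bar> * (\<beta> * X)"
    using mult_left_mono \<open>0 \<le> \<epsilon>\<close> by (fastforce simp: mult.assoc)
  also have "\<dots> \<le> t * \<eta> * X\<^sup>2 + \<epsilon>\<^sup>2 * a\<^sup>2 * (\<beta>\<^sup>2 / (4 * t * \<eta>))"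
  proof -
    \<comment> \<open>AM-GM\<close>
    have "0 \<le> (t * \<eta> * X - \<epsilon> * \<bar>a\<bar> * \<beta> / 2)\<^sup>2 / (t * \<eta>)" using assms by simp
    also have "\<dots> = t * \<eta> * X\<^sup>2 + \<epsilon>\<^sup>2 * a\<^sup>2 * (\<beta>\<^sup>2 / (4 * t * \<eta>)) - \<epsilon> * \<bar>a\<bar> * (\<beta> * X)"
      using assms by (simp add: field_simps power2_eq_square)
    finally show ?thesis by simp
  qed
  finally have "\<epsilon> * a * b + \<epsilon>\<^sup>2 * a\<^sup>2 * V \<le> t * \<eta> * X\<^sup>2 + \<epsilon>\<^sup>2 * (V + \<beta>\<^sup>2 / (4 * t * \<eta>)) * a\<^sup>2"
    by (simp add: algebra_simps)
  also have "\<epsilon>\<^sup>2 * (V + \<beta>\<^sup>2 / (4 * t * \<eta>)) * a\<^sup>2 \<le> \<epsilon>\<^sup>2 * (V + \<beta>\<^sup>2 / (4 * t * \<eta>)) * (c * n)"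
    using assms by (intro mult_left_mono) auto
  also have "\<dots> \<le> (1 - t) * n"
    using mult_right_mono[OF small \<open>0 \<le> n\<close>] by (simp add: mult.assoc)
  finally show ?thesis by linarith
qed

lemma drift_bound:
  fixes A P P0 :: "real^'n^'n"
  assumes "0 \<le> t" "t \<le> 1"
  shows "\<bar>v \<bullet> (A *v x) + 2 * (v \<bullet> (((1 - t) *\<^sub>R P + t *\<^sub>R P0) *v x))\<bar>
           \<le> (norm (transpose A *v v) + 2 * (norm (transpose P *v v) + norm (transpose P0 *v v)))
              * norm x"
proof -
  have "\<bar>v \<bullet> (A *v x)\<bar> \<le> norm (transpose A *v v) * norm x"
    using Cauchy_Schwarz_ineq2[of "transpose A *v v" x] inner_matrix_vector_mult[of v A x] by simp
  moreover have "\<bar>v \<bullet> (((1 - t) *\<^sub>R P + t *\<^sub>R P0) *v x)\<bar>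
                   \<le> (norm (transpose P *v v) + norm (transpose P0 *v v)) * norm x"
  proof -
    have "\<bar>v \<bullet> (((1 - t) *\<^sub>R P + t *\<^sub>R P0) *v x)\<bar>
            = \<bar>(1 - t) * ((transpose P *v v) \<bullet> x) + t * ((transpose P0 *v v) \<bullet> x)\<bar>"
      by (simp add: matrix_vector_mult_add_rdistrib scaleR_matrix_vector_assoc[symmetric]
          inner_add_right inner_matrix_vector_mult)
    also have "\<dots> \<le> (1 - t) * \<bar>(transpose P *v v) \<bullet> x\<bar> + t * \<bar>(transpose P0 *v v) \<bullet> x\<bar>"
      using assms by (simp add: abs_mult order_trans[OF abs_triangle_ineq])
    also have "\<dots> \<le> \<bar>(transpose P *v v) \<bullet> x\<bar> + \<bar>(transpose P0 *v v) \<bullet> x\<bar>"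
      using assms by (intro add_mono) (auto simp: mult_left_le_one_le)
    also have "\<dots> \<le> (norm (transpose P *v v) + norm (transpose P0 *v v)) * norm x"
      by (simp add: distrib_right add_mono Cauchy_Schwarz_ineq2)
    finally show ?thesis .
  qed
  ultimately show ?thesis by (simp add: abs_triangle_ineq[THEN order_trans] algebra_simps)
qed

lemma grad_dot_flow_perturbation_nonpos:
  fixes A P P0 :: "real^'n^'n"
  assumes feasible: "\<And>x. grad_dot_flow A P x \<le> 0"
    and strict: "\<And>x. grad_dot_flow A P0 x \<le> - \<eta> * (x \<bullet> x)"
    and v_bound: "\<And>x. (v \<bullet> x)\<^sup>2 \<le> c * - grad_dot_flow A P x"
    and "0 < t" "t \<le> 1" "0 < \<eta>" "0 \<le> \<epsilon>"
    and small: "\<epsilon>\<^sup>2 * (v \<bullet> v + \<beta>\<^sup>2 / (4 * t * \<eta>)) * c \<le> 1 - t"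
    and \<beta>_def: "\<beta> = norm (transpose A *v v) + 2 * (norm (transpose P *v v) + norm (transpose P0 *v v))"
  shows "grad_dot_flow A ((1 - t) *\<^sub>R P + t *\<^sub>R P0 + \<epsilon> *\<^sub>R outer_prod v) x \<le> 0"
proof -
  define M where "M = (1 - t) *\<^sub>R P + t *\<^sub>R P0"
  have "grad_dot_flow A M x \<le> (1 - t) * grad_dot_flow A P x + t * grad_dot_flow A P0 x"
    unfolding M_def using \<open>0 < t\<close> \<open>t \<le> 1\<close> by (intro grad_dot_flow_convex) auto
  also have "\<dots> \<le> - (1 - t) * - grad_dot_flow A P x - t * \<eta> * (norm x)\<^sup>2"
    using mult_left_mono[OF strict[of x], of t] \<open>0 < t\<close>
    by (simp add: power2_norm_eq_inner algebra_simps)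
  finally have "grad_dot_flow A M x \<le> - (1 - t) * - grad_dot_flow A P x - t * \<eta> * (norm x)\<^sup>2" .
  moreover have "- (1 - t) * - grad_dot_flow A P x - t * \<eta> * (norm x)\<^sup>2
      + \<epsilon> * (v \<bullet> x) * (v \<bullet> (A *v x) + 2 * (v \<bullet> (M *v x))) + \<epsilon>\<^sup>2 * (v \<bullet> x)\<^sup>2 * (v \<bullet> v) \<le> 0"
  proof (rule perturbation_inequality)
    show "\<bar>v \<bullet> (A *v x) + 2 * (v \<bullet> (M *v x))\<bar> \<le> \<beta> * norm x"
      unfolding M_def \<beta>_def using \<open>0 < t\<close> \<open>t \<le> 1\<close> by (intro drift_bound) auto
  qed (use assms in auto)
  ultimately show ?thesis
    by (simp add: M_def[symmetric] grad_dot_flow_rank_one_update)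
qed

lemma small_step_exists:
  fixes \<kappa> c V \<beta> \<eta> :: real
  assumes "0 < \<kappa>" "0 \<le> c" "0 \<le> V" "0 < \<eta>"
  shows "\<exists>\<epsilon>>0. \<kappa> * \<epsilon> \<le> 1 \<and> \<epsilon>\<^sup>2 * (V + \<beta>\<^sup>2 / (4 * (\<kappa> * \<epsilon>) * \<eta>)) * c \<le> 1 - \<kappa> * \<epsilon>"
proof -
  define K where "K = c * V + c * \<beta>\<^sup>2 / (4 * \<kappa> * \<eta>) + \<kappa>"
  define \<epsilon> where "\<epsilon> = 1 / (1 + K)"
  have "0 \<le> K" using assms by (simp add: K_def)
  then have "0 < \<epsilon>" "\<epsilon> \<le> 1" "\<epsilon> * K \<le> 1" by (auto simp: \<epsilon>_def field_simps)
  have "\<epsilon>\<^sup>2 * (V + \<beta>\<^sup>2 / (4 * (\<kappa> * \<epsilon>) * \<eta>)) * c = \<epsilon> * (\<epsilon> * (c * V)) + \<epsilon> * (c * \<beta>\<^sup>2 / (4 * \<kappa> * \<eta>))"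
    using \<open>0 < \<epsilon>\<close> assms by (simp add: field_simps power2_eq_square)
  also have "\<dots> \<le> \<epsilon> * (c * V) + \<epsilon> * (c * \<beta>\<^sup>2 / (4 * \<kappa> * \<eta>))"
    using \<open>0 < \<epsilon>\<close> \<open>\<epsilon> \<le> 1\<close> assms by (simp add: mult_left_le_one_le)
  finally have "\<epsilon>\<^sup>2 * (V + \<beta>\<^sup>2 / (4 * (\<kappa> * \<epsilon>) * \<eta>)) * c + \<kappa> * \<epsilon> \<le> \<epsilon> * K"
    by (simp add: K_def algebra_simps)
  moreover have "\<kappa> * \<epsilon> \<le> \<epsilon> * K"
    using \<open>0 < \<epsilon>\<close> assms mult_right_mono[of \<kappa> K \<epsilon>] by (simp add: K_def mult.commute)
  ultimately show ?thesis
    using \<open>0 < \<epsilon>\<close> \<open>\<epsilon> * K \<le> 1\<close> by (intro exI[of _ \<epsilon>] conjI) linarith+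
qed

lemma riccati_nonzero_imp_dominated_vector:
  fixes A P :: "real^'n^'n"
  assumes symP: "transpose P = P"
    and feasible: "\<And>x. grad_dot_flow A P x \<le> 0"
    and nonzero: "P ** A + transpose A ** P + 2 *\<^sub>R (P ** P) \<noteq> 0"
  shows "\<exists>v c. v \<noteq> 0 \<and> 0 \<le> c \<and> (\<forall>x. (v \<bullet> x)\<^sup>2 \<le> c * - grad_dot_flow A P x)"
proof -
  define S where "S = P ** A + transpose A ** P + 2 *\<^sub>R (P ** P)"
  have symS: "transpose S = S"
    by (simp add: S_def transpose_add matrix_transpose_mul transpose_scalar symP add_ac)
  have quadS: "x \<bullet> (S *v x) = 2 * grad_dot_flow A P x" for x
    unfolding S_def by (rule quadratic_form_riccati[OF symP])
  have "nsd S" using feasible by (simp add: nsd_def quadS mult_nonpos_nonneg)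
  obtain w where "S *v w \<noteq> 0"
    using nonzero by (metis S_def matrix_eq matrix_vector_mult_0)
  moreover have "0 \<le> - 2 * (w \<bullet> (S *v w))" using \<open>nsd S\<close> by (simp add: nsd_def)
  moreover have "((S *v w) \<bullet> x)\<^sup>2 \<le> - 2 * (w \<bullet> (S *v w)) * - grad_dot_flow A P x" for x
    using nsd_cauchy_schwarz[OF symS \<open>nsd S\<close>, of w x] inner_matrix_vector_mult[of w S x]
    by (simp add: symS quadS)
  ultimately show ?thesis by blast
qed

lemma riccati_nonzero_imp_trace_improvable:
  fixes A P P0 :: "real^'n^'n"
  assumes symP: "transpose P = P" and symP0: "transpose P0 = P0"
    and feasible: "\<And>x. grad_dot_flow A P x \<le> 0"
    and "0 < \<eta>" and strict: "\<And>x. grad_dot_flow A P0 x \<le> - \<eta> * (x \<bullet> x)"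
    and nonzero: "P ** A + transpose A ** P + 2 *\<^sub>R (P ** P) \<noteq> 0"
  shows "\<exists>Q. transpose Q = Q \<and> (\<forall>x. grad_dot_flow A Q x \<le> 0) \<and> trace P < trace Q"
proof -
  obtain v c where "v \<noteq> 0" "0 \<le> c"
    and v_bound: "\<And>x. (v \<bullet> x)\<^sup>2 \<le> c * - grad_dot_flow A P x"
    using riccati_nonzero_imp_dominated_vector[OF symP feasible nonzero] by blast
  then have "0 < v \<bullet> v" by simp
  define \<beta> where "\<beta> = norm (transpose A *v v) + 2 * (norm (transpose P *v v) + norm (transpose P0 *v v))"
  define d where "d = \<bar>trace P0 - trace P\<bar>"
  define \<kappa> where "\<kappa> = (v \<bullet> v) / (2 * (d + 1))"
  have "0 \<le> d" by (simp add: d_def)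
  with \<open>0 < v \<bullet> v\<close> have "0 < \<kappa>" by (simp add: \<kappa>_def)
  obtain \<epsilon> where "0 < \<epsilon>" "\<kappa> * \<epsilon> \<le> 1"
    and small: "\<epsilon>\<^sup>2 * (v \<bullet> v + \<beta>\<^sup>2 / (4 * (\<kappa> * \<epsilon>) * \<eta>)) * c \<le> 1 - \<kappa> * \<epsilon>"
    using small_step_exists[OF \<open>0 < \<kappa>\<close> \<open>0 \<le> c\<close> _ \<open>0 < \<eta>\<close>] by (meson inner_ge_zero)
  define t where "t = \<kappa> * \<epsilon>"
  have "0 < t" using \<open>0 < \<kappa>\<close> \<open>0 < \<epsilon>\<close> by (simp add: t_def)
  \<comment> \<open>the rank-one term gains \<open>\<epsilon> (v \<bullet> v)\<close> in trace, which outweighs the loss \<open>\<kappa> \<epsilon> d\<close> of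
     moving towards \<open>P0\<close>; the margin of \<open>P0\<close> absorbs the cross terms of the rank-one term\<close>
  define Q where "Q = (1 - t) *\<^sub>R P + t *\<^sub>R P0 + \<epsilon> *\<^sub>R outer_prod v"
  have "transpose Q = Q"
    by (simp add: Q_def transpose_add transpose_scalar symP symP0 transpose_outer_prod)
  moreover have "grad_dot_flow A Q x \<le> 0" for x
    unfolding Q_def
    using grad_dot_flow_perturbation_nonpos[OF feasible strict v_bound \<open>0 < t\<close> _ \<open>0 < \<eta>\<close> _ _ \<beta>_def]
      \<open>0 < \<epsilon>\<close> \<open>\<kappa> * \<epsilon> \<le> 1\<close> small by (simp add: t_def)
  moreover have "trace P < trace Q"
  proof -
    have "\<kappa> * d < v \<bullet> v"
      using \<open>0 < v \<bullet> v\<close> \<open>0 \<le> d\<close> by (simp add: \<kappa>_def field_simps add_nonneg_pos)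
    moreover have "\<kappa> * - (trace P0 - trace P) \<le> \<kappa> * d"
      using \<open>0 < \<kappa>\<close> by (intro mult_left_mono) (auto simp: d_def)
    ultimately have "0 < \<kappa> * (trace P0 - trace P) + v \<bullet> v" by linarith
    with \<open>0 < \<epsilon>\<close> have "0 < \<epsilon> * (\<kappa> * (trace P0 - trace P) + v \<bullet> v)" by simp
    also have "\<dots> = trace Q - trace P"
      unfolding Q_def trace_add trace_scaleR trace_outer_prod by (simp add: t_def algebra_simps)
    finally show ?thesis by simp
  qed
  ultimately show ?thesis by blast
qed

section \<open>Annihilating products of linear factors\<close>

fun mat_pow :: "'a::semiring_1^'n^'n \<Rightarrow> nat \<Rightarrow> 'a^'n^'n" where
  "mat_pow K 0 = mat 1"
| "mat_pow K (Suc i) = K ** mat_pow K i"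

definition poly_mat :: "'a::comm_ring_1 poly \<Rightarrow> 'a^'n^'n \<Rightarrow> 'a^'n^'n" where
  "poly_mat p K = (\<Sum>i\<le>degree p. mat (coeff p i) ** mat_pow K i)"

lemma poly_mat_eq_sum:
  assumes "degree p \<le> m"
  shows "poly_mat p K = (\<Sum>i\<le>m. mat (coeff p i) ** mat_pow K i)"
  unfolding poly_mat_def
  by (rule sum.mono_neutral_left) (use assms in \<open>auto simp: coeff_eq_0\<close>)

lemma poly_mat_add: "poly_mat (p + q) K = poly_mat p K + poly_mat q K"
proof -
  define m where "m = max (degree p) (degree q)"
  have "degree (p + q) \<le> m" by (simp add: m_def degree_add_le)
  then show ?thesis
    by (simp add: poly_mat_eq_sum[of _ m] m_def mat_add matrix_add_rdistrib sum.distrib)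
qed

lemma poly_mat_smult: "poly_mat (smult c p) K = mat c ** poly_mat p K"
proof -
  have "poly_mat (smult c p) K = (\<Sum>i\<le>degree p. mat c ** (mat (coeff p i) ** mat_pow K i))"
    by (simp add: poly_mat_eq_sum[OF degree_smult_le] matrix_mul_assoc mat_mult_mat)
  then show ?thesis by (simp add: poly_mat_def matrix_mul_sum_right)
qed

lemma poly_mat_pCons_0: "poly_mat (pCons 0 p) K = K ** poly_mat p K"
proof -
  have "degree (pCons 0 p) \<le> Suc (degree p)" by (simp add: degree_pCons_le)
  then have "poly_mat (pCons 0 p) K = (\<Sum>i\<le>degree p. mat (coeff p i) ** (K ** mat_pow K i))"
    by (simp only: poly_mat_eq_sum sum.atMost_Suc_shift) simp
  also have "\<dots> = (\<Sum>i\<le>degree p. K ** (mat (coeff p i) ** mat_pow K i))"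
    by (intro sum.cong refl) (metis matrix_mul_assoc mat_matrix_mul_commute)
  also have "\<dots> = K ** poly_mat p K"
    by (simp add: poly_mat_def matrix_mul_sum_right)
  finally show ?thesis .
qed

lemma poly_mat_linear_factor: "poly_mat ([:-a, 1:] * p) K = (K - mat a) ** poly_mat p K"
proof -
  have split: "[:-a, 1:] * p = pCons 0 p + smult (-a) p" by simp
  show ?thesis
    unfolding split poly_mat_add poly_mat_smult poly_mat_pCons_0
    by (simp add: mat_uminus matrix_diff_rdistrib matrix_mul_uminus_left)
qed

lemma poly_mat_monom: "poly_mat (monom c k) K = mat c ** mat_pow K k"
  by (simp add: poly_mat_eq_sum[OF degree_monom_le] coeff_monom if_distrib if_distribR
      cong: if_cong)

lemma poly_mat_sum: "poly_mat (\<Sum>i\<in>I. f i) K = (\<Sum>i\<in>I. poly_mat (f i) K)"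
  by (induction I rule: infinite_finite_induct) (auto simp: poly_mat_add poly_mat_def[of 0])

lemma euclidean_family_dependent:
  fixes f :: "nat \<Rightarrow> 'v::euclidean_space"
  shows "\<exists>u. (\<exists>k\<le>DIM('v). u k \<noteq> 0) \<and> (\<Sum>k\<le>DIM('v). u k *\<^sub>R f k) = 0"
proof (cases "inj_on f {..DIM('v)}")
  case False
  then obtain i j where ij: "i \<le> DIM('v)" "j \<le> DIM('v)" "i \<noteq> j" "f i = f j"
    by (auto simp: inj_on_def)
  define u where "u k = (if k = i then 1 else if k = j then -1 else 0 :: real)" for k
  have "(\<Sum>k\<le>DIM('v). u k *\<^sub>R f k) = (\<Sum>k\<in>{i, j}. u k *\<^sub>R f k)"
    by (rule sum.mono_neutral_right) (use ij in \<open>auto simp: u_def\<close>)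
  also have "\<dots> = 0" using ij by (simp add: u_def)
  finally show ?thesis using ij by (intro exI[of _ u]) (auto simp: u_def)
next
  case True
  define S where "S = f ` {..DIM('v)}"
  have "dependent S"
    using True by (intro dependent_biggerset) (simp add: S_def card_image)
  then obtain w where w: "\<exists>s\<in>S. w s \<noteq> 0" "(\<Sum>s\<in>S. w s *\<^sub>R s) = 0"
    using real_vector.dependent_finite[of S] by (auto simp: S_def)
  then show ?thesis
    using True by (intro exI[of _ "w \<circ> f"]) (auto simp: S_def sum.reindex)
qed

fun factor_prod :: "'a::ring_1 list \<Rightarrow> 'a^'n^'n \<Rightarrow> 'a^'n^'n" where
  "factor_prod [] K = mat 1"
| "factor_prod (a # as) K = (K - mat a) ** factor_prod as K"

lemma poly_mat_eq_factor_prod: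
  fixes K :: "complex^'n^'n"
  shows "p \<noteq> 0 \<Longrightarrow> \<exists>as c. c \<noteq> 0 \<and> poly_mat p K = mat c ** factor_prod as K"
proof (induction "degree p" arbitrary: p rule: less_induct)
  case less
  show ?case
  proof (cases "degree p = 0")
    case True
    then have "p = [:coeff p 0:]" by (rule degree_0_id[symmetric])
    moreover have "coeff p 0 \<noteq> 0" using less.prems True by (metis leading_coeff_0_iff)
    ultimately show ?thesis
      by (intro exI[of _ "[]"] exI[of _ "coeff p 0"])
        (metis poly_mat_monom monom_0 factor_prod.simps(1) mat_pow.simps(1))
  next
    case False
    then obtain z where "poly p z = 0"
      by (metis fundamental_theorem_of_algebra constant_degree)
    then obtain q where pq: "p = [:-z, 1:] * q" by (auto simp: poly_eq_0_iff_dvd elim: dvdE)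
    with less.prems have "q \<noteq> 0" by auto
    then have "degree p = Suc (degree q)"
      unfolding pq by (subst degree_mult_eq) auto
    with less.hyps \<open>q \<noteq> 0\<close> obtain as c where "c \<noteq> 0" "poly_mat q K = mat c ** factor_prod as K"
      by (metis lessI)
    then have "poly_mat p K = (K - mat z) ** (mat c ** factor_prod as K)"
      unfolding pq poly_mat_linear_factor by simp
    also have "\<dots> = mat c ** factor_prod (z # as) K"
      by (metis factor_prod.simps(2) mat_matrix_mul_commute matrix_mul_assoc)
    finally show ?thesis using \<open>c \<noteq> 0\<close> by blast
  qed
qed

lemma factor_prod_annihilates:
  fixes K :: "complex^'n^'n"
  shows "\<exists>as. factor_prod as K = 0"
proof -
  define D where "D = DIM(complex^'n^'n)"
  obtain u where u: "\<exists>k\<le>D. u k \<noteq> 0" "(\<Sum>k\<le>D. u k *\<^sub>R mat_pow K k) = 0"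
    using euclidean_family_dependent[of "mat_pow K"] by (auto simp: D_def)
  define p where "p = (\<Sum>k\<le>D. monom (complex_of_real (u k)) k)"
  have "coeff p k = (if k \<le> D then complex_of_real (u k) else 0)" for k
    by (simp add: p_def coeff_sum)
  then have "p \<noteq> 0" using u(1) by (metis coeff_0 of_real_eq_0_iff)
  have "poly_mat p K = 0"
    using u(2) by (simp add: p_def poly_mat_sum poly_mat_monom mat_of_real_matrix_mul)
  then obtain as c where "c \<noteq> 0" "mat c ** factor_prod as K = 0"
    using poly_mat_eq_factor_prod[OF \<open>p \<noteq> 0\<close>] by metis
  from \<open>c \<noteq> 0\<close> have "factor_prod as K = mat (1 / c) ** (mat c ** factor_prod as K)"
    by (simp add: matrix_mul_assoc mat_mult_mat)
  with \<open>mat c ** factor_prod as K = 0\<close> show ?thesis by auto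
qed

lemma sylvester_unique:
  fixes N K :: "'a::field^'n^'n"
  assumes disjoint: "\<And>a. invertible (N - mat a) \<or> invertible (K - mat a)"
  shows "N ** Y = Y ** K \<Longrightarrow> Y ** factor_prod as K = 0 \<Longrightarrow> Y = 0"
proof (induction as arbitrary: Y)
  case Nil
  then show ?case by simp
next
  case (Cons a as)
  have Y': "Y ** (K - mat a) = (N - mat a) ** Y"
    using Cons.prems(1) by (simp add: matrix_diff_ldistrib matrix_diff_rdistrib mat_matrix_mul_commute)
  have "K ** (K - mat a) = (K - mat a) ** K"
    by (simp add: matrix_diff_ldistrib matrix_diff_rdistrib mat_matrix_mul_commute)
  then have "N ** (Y ** (K - mat a)) = (Y ** (K - mat a)) ** K"
    by (metis Cons.prems(1) matrix_mul_assoc)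
  moreover have "(Y ** (K - mat a)) ** factor_prod as K = 0"
    using Cons.prems(2) by (simp add: matrix_mul_assoc)
  ultimately have "Y ** (K - mat a) = 0" by (rule Cons.IH)
  with Y' disjoint[of a] show ?case
    using invertible_matrix_mul_eq_0_left invertible_matrix_mul_eq_0_right by metis
qed

section \<open>The Lyapunov equation\<close>

lemma cmat_mult: "cmat (X ** Y) = cmat X ** cmat Y"
  by (simp add: cmat_def matrix_matrix_mult_def vec_eq_iff)

lemma cmat_transpose: "cmat (transpose X) = transpose (cmat X)"
  by (simp add: cmat_def transpose_def vec_eq_iff)

lemma cmat_add: "cmat (X + Y) = cmat X + cmat Y"
  by (simp add: cmat_def vec_eq_iff)

lemma cmat_eq_0_iff: "cmat X = 0 \<longleftrightarrow> X = 0"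
  by (simp add: cmat_def vec_eq_iff)

lemma invertible_cmat_minus_mat:
  assumes "\<not> is_eigenvalue A a"
  shows "invertible (cmat A - mat a)"
  unfolding invertible_left_inverse matrix_left_invertible_ker
  using assms
  by (auto simp: is_eigenvalue_def matrix_vector_mult_diff_rdistrib mat_matrix_vector_mult)

lemma lyapunov_injective:
  fixes A Q :: "real^'n^'n"
  assumes hurwitz: "\<And>l. is_eigenvalue A l \<Longrightarrow> Re l < 0"
    and "Q ** A + transpose A ** Q = 0"
  shows "Q = 0"
proof -
  define M where "M = cmat A"
  have "cmat Q ** M + transpose M ** cmat Q = 0"
    using arg_cong[OF assms(2), of cmat]
    by (simp add: M_def cmat_add cmat_mult cmat_transpose cmat_eq_0_iff)
  then have sylvester: "transpose M ** cmat Q = cmat Q ** - M"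
    by (simp add: matrix_mul_uminus_right eq_neg_iff_add_eq_0 add.commute)
  \<comment> \<open>the spectra of \<open>transpose M\<close> and \<open>- M\<close> lie in opposite open half-planes\<close>
  have disjoint: "invertible (transpose M - mat a) \<or> invertible (- M - mat a)" for a
  proof (cases "0 \<le> Re a")
    case True
    then have "invertible (M - mat a)"
      using hurwitz[of a] invertible_cmat_minus_mat by (force simp: M_def)
    then show ?thesis
      by (metis invertible_transpose_iff transpose_mat transpose_diff)
  next
    case False
    then have "invertible (M - mat (- a))"
      using hurwitz[of "- a"] invertible_cmat_minus_mat by (force simp: M_def)
    then show ?thesis
      using invertible_uminus by (fastforce simp: mat_uminus)
  qed
  obtain as where "factor_prod as (- M) = 0" using factor_prod_annihilates by blast
  then have "cmat Q = 0" using sylvester_unique[OF disjoint sylvester, of as] by simp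
  then show ?thesis by (simp add: cmat_eq_0_iff)
qed

lemma lyapunov_solvable:
  fixes A :: "real^'n^'n"
  assumes hurwitz: "\<And>l. is_eigenvalue A l \<Longrightarrow> Re l < 0"
  shows "\<exists>Q. transpose Q = Q \<and> Q ** A + transpose A ** Q = - mat 1"
proof -
  define L where "L Q = Q ** A + transpose A ** Q" for Q :: "real^'n^'n"
  have "linear L"
    by (rule linearI)
      (simp_all add: L_def matrix_add_rdistrib matrix_add_ldistrib scalar_matrix_assoc
        matrix_scalar_ac scaleR_right_distrib algebra_simps)
  have "inj L"
  proof (rule injI)
    fix X Y assume "L X = L Y"
    then have "L (X - Y) = 0" using linear_diff[OF \<open>linear L\<close>] by simp
    then show "X = Y" using lyapunov_injective[OF hurwitz, where Q = "X - Y"] by (simp add: L_def)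
  qed
  then obtain Q where Q: "L Q = - mat 1"
    using linear_inj_imp_surj[OF \<open>linear L\<close>] by (metis surjD)
  have "L (transpose Q) = transpose (L Q)"
    by (simp add: L_def matrix_transpose_mul transpose_add add.commute)
  with Q have "L (transpose Q) = L Q" by (simp add: transpose_def mat_def vec_eq_iff)
  with \<open>inj L\<close> Q show ?thesis by (metis L_def injD)
qed

lemma lyapunov_solution_imp_strictly_feasible:
  fixes A Q :: "real^'n^'n"
  assumes symQ: "transpose Q = Q" and lyap: "Q ** A + transpose A ** Q = - mat 1"
  shows "\<exists>P0 \<eta>. transpose P0 = P0 \<and> 0 < \<eta> \<and> (\<forall>x. grad_dot_flow A P0 x \<le> - \<eta> * (x \<bullet> x))"
proof -
  obtain K where "0 < K" and K: "\<And>x. norm (Q *v x) \<le> norm x * K"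
    using bounded_linear.pos_bounded[OF matrix_vector_mul_bounded_linear[of Q]] by blast
  define s where "s = 1 / (4 * K\<^sup>2)"
  have "0 < s" using \<open>0 < K\<close> by (simp add: s_def)
  have decay: "(Q *v x) \<bullet> (A *v x) = - (x \<bullet> x) / 2" for x
    using quadratic_form_lyapunov[OF symQ, of x A] by (simp add: lyap matrix_vector_mult_uminus)
  have "grad_dot_flow A (s *\<^sub>R Q) x \<le> - (s / 4) * (x \<bullet> x)" for x
  proof -
    have "grad_dot_flow A (s *\<^sub>R Q) x = s * ((Q *v x) \<bullet> (A *v x)) + s\<^sup>2 * (norm (Q *v x))\<^sup>2"
      by (simp add: grad_dot_flow_def matrix_vector_mult_add_rdistrib
          scaleR_matrix_vector_assoc[symmetric] inner_add_right dot_square_norm power2_eq_square)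
    also have "\<dots> \<le> s * (- (x \<bullet> x) / 2) + s\<^sup>2 * (norm x * K)\<^sup>2"
      using K[of x] \<open>0 < s\<close> by (simp add: decay power_mono)
    also have "s\<^sup>2 * (norm x * K)\<^sup>2 = s * (x \<bullet> x) / 4"
      using \<open>0 < K\<close> by (simp add: s_def power2_norm_eq_inner power_mult_distrib field_simps)
    finally show ?thesis by (simp add: algebra_simps)
  qed
  moreover have "transpose (s *\<^sub>R Q) = s *\<^sub>R Q" by (simp add: transpose_scalar symQ)
  ultimately show ?thesis using \<open>0 < s\<close> by (intro exI[of _ "s *\<^sub>R Q"] exI[of _ "s / 4"]) auto
qed

lemma has_derivative_half_quadratic_form:
  fixes P :: "real^'n^'n"
  assumes "transpose P = P"
  shows "((\<lambda>x. (1/2) * (x \<bullet> (P *v x))) has_derivative (\<lambda>h. (P *v x) \<bullet> h)) (at x)"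
proof -
  have "((\<lambda>x. (1/2) * (x \<bullet> (P *v x))) has_derivative
          (\<lambda>h. (1/2) * (h \<bullet> (P *v x) + x \<bullet> (P *v h)))) (at x)"
    by (auto intro!: derivative_eq_intros bounded_linear_imp_has_derivative)
  moreover have "(\<lambda>h. (1/2) * (h \<bullet> (P *v x) + x \<bullet> (P *v h))) = (\<lambda>h. (P *v x) \<bullet> h)"
    using inner_matrix_vector_mult_symmetric[OF assms, of x] by (auto simp: inner_commute)
  ultimately show ?thesis by simp
qed

lemma optimal_imp_riccati_eq_0:
  fixes A P :: "real^'n^'n"
  assumes hurwitz: "\<And>l. is_eigenvalue A l \<Longrightarrow> Re l < 0" and "optimal A P"
  shows "P ** A + transpose A ** P + 2 *\<^sub>R (P ** P) = 0"
proof (rule ccontr)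
  assume nonzero: "P ** A + transpose A ** P + 2 *\<^sub>R (P ** P) \<noteq> 0"
  have symP: "transpose P = P" and feasibleP: "\<And>x. grad_dot_flow A P x \<le> 0"
    using \<open>optimal A P\<close> by (auto simp: optimal_def feasible_def nsd_iff_grad_dot_flow_nonpos)
  obtain P0 \<eta> where "transpose P0 = P0" "0 < \<eta>" "\<And>x. grad_dot_flow A P0 x \<le> - \<eta> * (x \<bullet> x)"
    using lyapunov_solution_imp_strictly_feasible lyapunov_solvable[OF hurwitz] by metis
  then obtain Q where "transpose Q = Q" "\<forall>x. grad_dot_flow A Q x \<le> 0" "trace P < trace Q"
    using riccati_nonzero_imp_trace_improvable[OF symP _ feasibleP _ _ nonzero]
    by blast
  then have "feasible A Q" by (simp add: feasible_def nsd_iff_grad_dot_flow_nonpos)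
  with \<open>optimal A P\<close> \<open>trace P < trace Q\<close> show False by (auto simp: optimal_def)
qed

theorem mainTheorem1:
  fixes A P :: "real^'n^'n"
    and U :: "real^'n \<Rightarrow> real"
    and fU :: "real^'n \<Rightarrow> real^'n"
  assumes full_rank: "rank A = CARD('n)"
    and hurwitz: "\<And>l. is_eigenvalue A l \<Longrightarrow> Re l < 0"
    and symP: "transpose P = P"
    and U_def: "\<And>x. U x = (1/2) * (x \<bullet> (P *v x))"
    and fU_def: "\<And>x. fU x = (A + P) *v x"
  shows "(\<forall>x. (U has_derivative (\<lambda>h. (P *v x) \<bullet> h)) (at x)
            \<and> A *v x = - (P *v x) + fU x)
         \<and> (optimal A P \<longrightarrow>
              P ** A + transpose A ** P + 2 *\<^sub>R (P ** P) = 0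
            \<and> (\<forall>x. (P *v x) \<bullet> fU x = 0))"
proof (intro conjI allI impI)
  fix x
  have "U = (\<lambda>x. (1/2) * (x \<bullet> (P *v x)))" using U_def by auto
  then show "(U has_derivative (\<lambda>h. (P *v x) \<bullet> h)) (at x)"
    using has_derivative_half_quadratic_form[OF symP] by simp
  show "A *v x = - (P *v x) + fU x" by (simp add: fU_def matrix_vector_mult_add_rdistrib)
next
  assume "optimal A P"
  show riccati: "P ** A + transpose A ** P + 2 *\<^sub>R (P ** P) = 0"
    using optimal_imp_riccati_eq_0[OF hurwitz \<open>optimal A P\<close>] .
  fix x
  show "(P *v x) \<bullet> fU x = 0"
    using quadratic_form_riccati[OF symP, of x A] by (simp add: riccati grad_dot_flow_def fU_def)
qed

end
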